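(* Let $H$ be a $\Lambda$-module, $k_1,k_2\ge1$ coprime integers, $z_1,z_2\in S^1$, and $\chi_i\colon H\to H/(t^{k_i}-1)\to S^1$ characters ($i=1,2$). Then $\alpha_{(k_1,z_1,\chi_1)}\otimes\alpha_{(k_2,z_2,\chi_2)}$ is conjugate to $\alpha_{(k_1k_2,\,z_1z_2,\,\chi_1\chi_2)}$, where $\chi_1\chi_2(h)=\chi_1(h)\chi_2(h)$ (a character factoring through $H/(t^{k_1k_2}-1)$). If moreover $\alpha_{(k_1,z_1,\chi_1)}$ and $\alpha_{(k_2,z_2,\chi_2)}$ are irreducible, then their tensor product is irreducible.
   Context: $\Lambda=\mathbb{Z}[t,t^{-1}]$; $\mathbb{Z}\ltimes H$ has multiplication $(n,h)(m,h')=(n+m,t^mh+h')$. For $k\ge1$, $z\in S^1$ and a character $\chi\colon H\to S^1$ factoring through $H/(t^k-1)H$, $\alpha_{(k,z,\chi)}\colon\mathbb{Z}\ltimes H\to U(k)$ is $\alpha_{(k,z,\chi)}(n,h)=z^nA_k^n\,\mathrm{diag}(\chi(h),\chi(th),\dots,\chi(t^{k-1}h))$, where $A_k$ is the $k\times k$ cyclic permutation matrix with $A_ke_i=e_{i+1}$ (indices mod $k$). *)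

theory Defs
  imports "Jordan_Normal_Form.Schur_Decomposition"
begin

(* A Lambda-module, Lambda = Z[t,t^-1]: an abelian group 'h with an additive
   automorphism t (the action of t). *)
definition lambda_module :: "('h::ab_group_add \<Rightarrow> 'h) \<Rightarrow> bool" where
  "lambda_module t \<longleftrightarrow> bij t \<and> (\<forall>a b. t (a + b) = t a + t b)"

(* chi : H -> S^1 is a character factoring through H/(t^k - 1)H *)
definition char_through :: "('h::ab_group_add \<Rightarrow> 'h) \<Rightarrow> nat \<Rightarrow> ('h \<Rightarrow> complex) \<Rightarrow> bool" where
  "char_through t k \<chi> \<longleftrightarrow>
     (\<forall>a b. \<chi> (a + b) = \<chi> a * \<chi> b) \<and> (\<forall>h. cmod (\<chi> h) = 1) \<and>
     (\<forall>h. \<chi> ((t ^^ k) h - h) = 1)"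

(* n-th power (n \<in> Z) of the k x k cyclic permutation matrix A_k with A_k e_i = e_{i+1}
   (indices mod k): A_k^n e_j = e_{(j+n) mod k}. *)
definition cyc_pow :: "nat \<Rightarrow> int \<Rightarrow> complex mat" where
  "cyc_pow k n = mat k k (\<lambda>(i, j). if int i = (int j + n) mod int k then 1 else 0)"

definition alpha :: "('h \<Rightarrow> 'h) \<Rightarrow> nat \<Rightarrow> complex \<Rightarrow> ('h \<Rightarrow> complex) \<Rightarrow> int \<times> 'h \<Rightarrow> complex mat" where
  "alpha t k z \<chi> g = (case g of (n, h) \<Rightarrow>
     (z powi n) \<cdot>\<^sub>m (cyc_pow k n * mat k k (\<lambda>(i, j). if i = j then \<chi> ((t ^^ i) h) else 0)))"

definition kron :: "complex mat \<Rightarrow> complex mat \<Rightarrow> complex mat" where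
  "kron A B = mat (dim_row A * dim_row B) (dim_col A * dim_col B)
     (\<lambda>(i, j). A $$ (i div dim_row B, j div dim_col B) * B $$ (i mod dim_row B, j mod dim_col B))"

definition unitary_mat :: "nat \<Rightarrow> complex mat \<Rightarrow> bool" where
  "unitary_mat n P \<longleftrightarrow> P \<in> carrier_mat n n \<and> mat_adjoint P * P = 1\<^sub>m n"

definition invariant_subspace :: "nat \<Rightarrow> ('g \<Rightarrow> complex mat) \<Rightarrow> complex vec set \<Rightarrow> bool" where
  "invariant_subspace n \<rho> W \<longleftrightarrow> W \<subseteq> carrier_vec n \<and> 0\<^sub>v n \<in> W \<and>
     (\<forall>v\<in>W. \<forall>w\<in>W. v + w \<in> W) \<and> (\<forall>c. \<forall>v\<in>W. c \<cdot>\<^sub>v v \<in> W) \<and>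
     (\<forall>g. \<forall>v\<in>W. \<rho> g *\<^sub>v v \<in> W)"

definition irreducible_rep :: "nat \<Rightarrow> ('g \<Rightarrow> complex mat) \<Rightarrow> bool" where
  "irreducible_rep n \<rho> \<longleftrightarrow> n > 0 \<and>
     (\<forall>W. invariant_subspace n \<rho> W \<longrightarrow> W = {0\<^sub>v n} \<or> W = carrier_vec n)"

end

theory Submission
  imports Defs
begin

text \<open>
  Index the factors of \<complex>^k1 \<otimes> \<complex>^k2 by pairs (i1, i2) and \<complex>^(k1 k2) by \<int>/k1k2. The factor
  A_k1^n \<otimes> A_k2^n shifts both components of a pair by n, and the diagonal factor has the entries
  \<chi>1(t^i1 h) \<chi>2(t^i2 h). Hence the Chinese remainder bijection m \<mapsto> (m mod k1, m mod k2)
  is a permutation matrix conjugating the tensor product into \<alpha>(k1 k2, z1 z2, \<chi>1 \<chi>2), because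
  \<chi>1 is invariant under t^k1 and \<chi>2 under t^k2.

  For irreducibility, \<alpha>(k, z, \<chi>) is irreducible iff the characters \<chi> \<circ> t^i, i < k, are pairwise
  distinct. If they are, the diagonal operators \<alpha>(0, h) separate the coordinate axes, so every
  nonzero invariant subspace contains a basis vector, which the monomial operators \<alpha>(n, 0) move
  to every other one. If \<chi> \<circ> t^i = \<chi> \<circ> t^j with i < j, the vectors of period j - i form a
  proper nonzero invariant subspace. Finally, if (\<chi>1 \<chi>2) \<circ> t^i = (\<chi>1 \<chi>2) \<circ> t^j, the quotient
  \<psi> = (\<chi>1 \<circ> t^j) / (\<chi>1 \<circ> t^i) = (\<chi>2 \<circ> t^i) / (\<chi>2 \<circ> t^j) is invariant under t^k1 and t^k2,
  hence under t by coprimality. Multiplying its defining identity over the points t^m x, m < k1,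
  gives \<psi>(x)^k1 \<chi>1(t^i N x) = \<chi>1(t^j N x) for the norm N = 1 + t + ... + t^(k1 - 1), and
  \<chi>1 \<circ> N is t-invariant; so \<psi>^k1 = 1, likewise \<psi>^k2 = 1, and \<psi> = 1. Distinctness for
  \<chi>1 and \<chi>2 now yields i \<equiv> j modulo k1 and modulo k2.
\<close>

lemma dim_mat_adjoint [simp]:
  "dim_row (mat_adjoint A) = dim_col A" "dim_col (mat_adjoint A) = dim_row A"
  unfolding mat_adjoint_def by auto

lemma index_mat_adjoint [simp]:
  "i < dim_col A \<Longrightarrow> j < dim_row A \<Longrightarrow> mat_adjoint A $$ (i, j) = conjugate (A $$ (j, i))"
  unfolding mat_adjoint_def by (auto simp: mat_of_rows_def)

lemma mat_adjoint_carrier: "A \<in> carrier_mat n m \<Longrightarrow> mat_adjoint A \<in> carrier_mat m n"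
  by (metis carrier_matD carrier_matI dim_mat_adjoint)

lemma dim_kron [simp]:
  "dim_row (kron A B) = dim_row A * dim_row B" "dim_col (kron A B) = dim_col A * dim_col B"
  unfolding kron_def by auto

lemma index_kron:
  "i < dim_row A * dim_row B \<Longrightarrow> j < dim_col A * dim_col B \<Longrightarrow>
   kron A B $$ (i, j) = A $$ (i div dim_row B, j div dim_col B) * B $$ (i mod dim_row B, j mod dim_col B)"
  unfolding kron_def by auto

lemma dim_alpha [simp]:
  "dim_row (alpha t k z \<chi> g) = k" "dim_col (alpha t k z \<chi> g) = k"
  unfolding alpha_def cyc_pow_def by (auto split: prod.splits)

lemma index_alpha:
  assumes "i < k" and "j < k"
  shows "alpha t k z \<chi> (n, h) $$ (i, j) =
    z powi n * (if int i = (int j + n) mod int k then \<chi> ((t ^^ j) h) else 0)"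
proof -
  have "(\<Sum>l = 0..<k. (if int i = (int l + n) mod int k then 1 else 0) *
          (if l = j then \<chi> ((t ^^ l) h) else 0))
      = (\<Sum>l = 0..<k. if l = j then (if int i = (int j + n) mod int k then \<chi> ((t ^^ j) h) else 0)
          else 0)"
    by (rule sum.cong) auto
  then show ?thesis
    using assms unfolding alpha_def cyc_pow_def by (simp add: scalar_prod_def)
qed

section \<open>Chinese remaindering\<close>

lemma of_nat_mod_eq_mod_iff_dvd: "int (m mod k) = x mod int k \<longleftrightarrow> int k dvd int m - x"
  by (simp add: of_nat_mod mod_eq_dvd_iff)

lemma eq_add_mod_iff_eq_diff_mod:
  assumes "i < k" and "j < k"
  shows "int i = (int j + n) mod int k \<longleftrightarrow> int j = (int i - n) mod int k"
proof -
  have "int i = (int j + n) mod int k \<longleftrightarrow> int k dvd int i - (int j + n)"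
    using of_nat_mod_eq_mod_iff_dvd[of i k] assms by simp
  also have "\<dots> \<longleftrightarrow> int k dvd int j - (int i - n)"
  proof -
    have "int j - (int i - n) = - (int i - (int j + n))"
      by simp
    then show ?thesis
      by (simp only: dvd_minus_iff)
  qed
  also have "\<dots> \<longleftrightarrow> int j = (int i - n) mod int k"
    using of_nat_mod_eq_mod_iff_dvd[of j k] assms by simp
  finally show ?thesis .
qed

lemma coprime_mult_dvd_iff:
  fixes a b c :: "'a :: semiring_gcd"
  shows "coprime a b \<Longrightarrow> a * b dvd c \<longleftrightarrow> a dvd c \<and> b dvd c"
  by (metis divides_mult dvd_mult_left dvd_mult_right)

text \<open>The pair (m mod k1, m mod k2) in the row-major indexing (i1, i2) \<mapsto> i1 * k2 + i2 of kron.\<close>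

definition crt_index :: "nat \<Rightarrow> nat \<Rightarrow> nat \<Rightarrow> nat" where
  "crt_index k1 k2 m = m mod k1 * k2 + m mod k2"

lemma crt_index_div: "0 < k2 \<Longrightarrow> crt_index k1 k2 m div k2 = m mod k1"
  unfolding crt_index_def by simp

lemma crt_index_mod: "crt_index k1 k2 m mod k2 = m mod k2"
  unfolding crt_index_def by simp

lemma crt_index_less:
  assumes "0 < k1" and "0 < k2"
  shows "crt_index k1 k2 m < k1 * k2"
proof -
  have "crt_index k1 k2 m < (m mod k1 + 1) * k2"
    unfolding crt_index_def using \<open>0 < k2\<close> by simp
  also have "\<dots> \<le> k1 * k2"
    using \<open>0 < k1\<close> by (intro mult_right_mono) (simp_all add: Suc_le_eq)
  finally show ?thesis .
qed

lemma eq_if_mod_eq_coprime: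
  fixes m m' :: nat
  assumes "coprime k1 k2" and "m < k1 * k2" and "m' < k1 * k2"
    and "m mod k1 = m' mod k1" and "m mod k2 = m' mod k2"
  shows "m = m'"
proof -
  have "int k1 dvd int m - int m'" and "int k2 dvd int m - int m'"
    using assms(4,5) by (metis mod_eq_dvd_iff of_nat_mod)+
  then have "int (k1 * k2) dvd int m - int m'"
    using assms(1) coprime_mult_dvd_iff[of "int k1" "int k2"] by simp
  then show ?thesis
    using assms(2,3) by (metis mod_eq_dvd_iff mod_less of_nat_eq_iff of_nat_mod)
qed

lemma bij_betw_crt_index:
  assumes "coprime k1 k2" and "0 < k1" and "0 < k2"
  shows "bij_betw (crt_index k1 k2) {..<k1 * k2} {..<k1 * k2}"
proof -
  have "inj_on (crt_index k1 k2) {..<k1 * k2}"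
  proof (rule inj_onI)
    fix m m' assume "m \<in> {..<k1 * k2}" "m' \<in> {..<k1 * k2}"
      and eq: "crt_index k1 k2 m = crt_index k1 k2 m'"
    have "m mod k1 = m' mod k1"
      using arg_cong[OF eq, of "\<lambda>x. x div k2"] by (simp add: crt_index_div[OF assms(3)])
    moreover have "m mod k2 = m' mod k2"
      using arg_cong[OF eq, of "\<lambda>x. x mod k2"] by (simp add: crt_index_mod)
    ultimately show "m = m'"
      using eq_if_mod_eq_coprime[OF assms(1)] \<open>m \<in> _\<close> \<open>m' \<in> _\<close> by simp
  qed
  moreover have "crt_index k1 k2 ` {..<k1 * k2} \<subseteq> {..<k1 * k2}"
    using crt_index_less[OF assms(2,3)] by auto
  ultimately show ?thesis
    by (simp add: bij_betw_def endo_inj_surj)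
qed

section \<open>Characters of \<Lambda>-modules\<close>

lemma lambda_module_funpow_add:
  "lambda_module t \<Longrightarrow> (t ^^ m) (a + b) = (t ^^ m) a + (t ^^ m) b"
  unfolding lambda_module_def by (induction m) auto

lemma lambda_module_funpow_zero: "lambda_module t \<Longrightarrow> (t ^^ m) 0 = 0"
  by (metis add_cancel_right_right lambda_module_funpow_add)

lemma lambda_module_funpow_sum:
  "lambda_module t \<Longrightarrow> (t ^^ m) (sum f A) = (\<Sum>x\<in>A. (t ^^ m) (f x))"
  by (induction A rule: infinite_finite_induct)
    (auto simp: lambda_module_funpow_zero lambda_module_funpow_add)

lemma lambda_module_funpow_surj: "lambda_module t \<Longrightarrow> surj (t ^^ m)"
  unfolding lambda_module_def by (simp add: bij_is_surj bij_fn)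

lemma funpow_comm: "(f ^^ m) ((f ^^ n) x) = (f ^^ n) ((f ^^ m) x)"
  by (metis funpow_add add.commute comp_apply)

lemma funpow_periodic_mult:
  assumes "\<And>x. f ((t ^^ k) x) = f x"
  shows "f ((t ^^ (q * k)) x) = f x"
proof (induction q arbitrary: x)
  case (Suc q)
  have "(t ^^ (Suc q * k)) x = (t ^^ k) ((t ^^ (q * k)) x)"
    by (simp add: funpow_add)
  then show ?case
    using Suc assms by metis
qed simp

lemma funpow_periodic_mod:
  assumes "\<And>x. f ((t ^^ k) x) = f x"
  shows "f ((t ^^ (m mod k)) x) = f ((t ^^ m) x)"
proof -
  have "(t ^^ m) x = (t ^^ (m div k * k)) ((t ^^ (m mod k)) x)"
    by (metis comp_apply funpow_add div_mult_mod_eq)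
  then show ?thesis
    using funpow_periodic_mult[where f = f and t = t and k = k, OF assms] by metis
qed

lemma char_through_add: "char_through t k \<chi> \<Longrightarrow> \<chi> (a + b) = \<chi> a * \<chi> b"
  unfolding char_through_def by auto

lemma char_through_nonzero: "char_through t k \<chi> \<Longrightarrow> \<chi> a \<noteq> 0"
  unfolding char_through_def by (metis norm_zero zero_neq_one)

lemma char_through_zero: "char_through t k \<chi> \<Longrightarrow> \<chi> 0 = 1"
  by (metis char_through_add char_through_nonzero add_0 mult_cancel_right1)

lemma char_through_sum: "char_through t k \<chi> \<Longrightarrow> \<chi> (sum f A) = (\<Prod>x\<in>A. \<chi> (f x))"
  by (induction A rule: infinite_finite_induct) (auto simp: char_through_zero char_through_add)

lemma char_through_iff_periodic:
  "char_through t k \<chi> \<longleftrightarrow>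
     (\<forall>a b. \<chi> (a + b) = \<chi> a * \<chi> b) \<and> (\<forall>h. cmod (\<chi> h) = 1) \<and> (\<forall>x. \<chi> ((t ^^ k) x) = \<chi> x)"
proof -
  have "\<chi> ((t ^^ k) x - x) = 1 \<longleftrightarrow> \<chi> ((t ^^ k) x) = \<chi> x"
    if "\<forall>a b. \<chi> (a + b) = \<chi> a * \<chi> b" and "\<forall>h. cmod (\<chi> h) = 1" for x
  proof -
    have "\<chi> ((t ^^ k) x) = \<chi> ((t ^^ k) x - x) * \<chi> x"
      by (metis that(1) diff_add_cancel)
    moreover have "\<chi> x \<noteq> 0"
      using that(2) by (metis norm_zero zero_neq_one)
    ultimately show ?thesis
      by auto
  qed
  then show ?thesis
    unfolding char_through_def by blast
qed

lemma char_through_periodic: "char_through t k \<chi> \<Longrightarrow> \<chi> ((t ^^ k) x) = \<chi> x"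
  unfolding char_through_iff_periodic by blast

lemma char_through_funpow_mod:
  "char_through t k \<chi> \<Longrightarrow> \<chi> ((t ^^ (m mod k)) x) = \<chi> ((t ^^ m) x)"
  using funpow_periodic_mod[where f = \<chi> and t = t and k = k] char_through_periodic by metis

lemma char_through_mult_period: "char_through t k \<chi> \<Longrightarrow> char_through t (q * k) \<chi>"
  unfolding char_through_iff_periodic using funpow_periodic_mult[where f = \<chi> and t = t and k = k]
  by blast

lemma char_through_mult:
  "char_through t k \<chi>1 \<Longrightarrow> char_through t k \<chi>2 \<Longrightarrow> char_through t k (\<lambda>h. \<chi>1 h * \<chi>2 h)"
  unfolding char_through_iff_periodic by (simp add: norm_mult)

lemma char_shift_quotient_pow_eq_1:
  fixes t :: "'h::ab_group_add \<Rightarrow> 'h"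
  assumes lm: "lambda_module t" and \<chi>: "char_through t k \<chi>"
    and quotient: "\<And>x. \<psi> x * \<chi> ((t ^^ i) x) = \<chi> ((t ^^ j) x)"
    and invariant: "\<And>x. \<psi> (t x) = \<psi> x"
  shows "\<psi> x ^ k = 1"
proof -
  define N where "N y = (\<Sum>m<k. (t ^^ m) y)" for y
  have N_funpow: "(t ^^ m) (N y) = N ((t ^^ m) y)" for m y
    unfolding N_def lambda_module_funpow_sum[OF lm]
    by (intro sum.cong refl funpow_comm)
  have "N (t y) = N y + ((t ^^ k) y - y)" for y
    unfolding N_def
    using sum.lessThan_Suc_shift[of "\<lambda>m. (t ^^ m) y" k] sum.lessThan_Suc[of "\<lambda>m. (t ^^ m) y" k]
    by (simp add: funpow_swap1 algebra_simps)
  then have "\<chi> (N ((t ^^ 1) y)) = \<chi> (N y)" for y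
    using \<chi> unfolding char_through_def by simp
  then have \<chi>_N: "\<chi> ((t ^^ m) (N y)) = \<chi> (N y)" for m y
    unfolding N_funpow using funpow_periodic_mult[where f = "\<chi> \<circ> N" and k = 1 and q = m] by simp
  have \<psi>_funpow: "\<psi> ((t ^^ m) x) = \<psi> x" for m
    by (induction m) (simp_all add: invariant)
  have "(\<Prod>m<k. \<psi> ((t ^^ m) x) * \<chi> ((t ^^ i) ((t ^^ m) x))) = (\<Prod>m<k. \<chi> ((t ^^ j) ((t ^^ m) x)))"
    using quotient by simp
  then have "\<psi> x ^ k * \<chi> ((t ^^ i) (N x)) = \<chi> ((t ^^ j) (N x))"
    unfolding N_def lambda_module_funpow_sum[OF lm] char_through_sum[OF \<chi>] prod.distrib \<psi>_funpow
    by simp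
  then show ?thesis
    using \<chi>_N char_through_nonzero[OF \<chi>] by simp
qed

lemma power_eq_1_coprime:
  fixes x :: "'a::monoid_mult"
  assumes "x ^ a = 1" and "x ^ b = 1" and "coprime a b" and "0 < a"
  shows "x = 1"
proof -
  obtain u v where uv: "a * u = b * v + 1"
    using bezout_nat[of a b] assms(3,4) by auto
  have "x = (x ^ b) ^ v * x"
    using assms(2) by simp
  also have "\<dots> = (x ^ a) ^ u"
    unfolding power_mult[symmetric] uv by (simp add: power_add power_commutes)
  also have "\<dots> = 1"
    using assms(1) by simp
  finally show ?thesis .
qed

lemma funpow_invariant_if_coprime_periods:
  assumes "coprime k1 k2" and "0 < k1"
    and periodic1: "\<And>x. f ((t ^^ k1) x) = f x" and periodic2: "\<And>x. f ((t ^^ k2) x) = f x"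
  shows "f (t y) = f y"
proof -
  obtain u v where uv: "k1 * u = k2 * v + 1"
    using bezout_nat[of k1 k2] assms(1,2) by auto
  have "f (t y) = f ((t ^^ (v * k2)) (t y))"
    by (rule funpow_periodic_mult[where f = f and t = t and k = k2, OF periodic2, symmetric])
  also have "(t ^^ (v * k2)) (t y) = (t ^^ (u * k1)) y"
    using uv by (simp add: mult.commute funpow_add funpow_swap1)
  also have "f \<dots> = f y"
    by (rule funpow_periodic_mult[where f = f and t = t and k = k1, OF periodic1])
  finally show ?thesis .
qed

lemma char_shift_quotient_periodic:
  assumes \<chi>: "char_through t k \<chi>" and quotient: "\<And>x. \<psi> x * \<chi> ((t ^^ i) x) = \<chi> ((t ^^ j) x)"
  shows "\<psi> ((t ^^ k) x) = \<psi> x"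
proof -
  have shift: "\<chi> ((t ^^ c) ((t ^^ k) x)) = \<chi> ((t ^^ c) x)" for c
    using char_through_periodic[OF \<chi>] by (simp add: funpow_comm[where f = t and m = c])
  have "\<psi> ((t ^^ k) x) * \<chi> ((t ^^ i) x) = \<chi> ((t ^^ j) x)"
    using quotient[of "(t ^^ k) x"] unfolding shift .
  then show ?thesis
    using quotient[of x] char_through_nonzero[OF \<chi>] by (metis mult_right_cancel)
qed

lemma char_product_shift_eq_imp_shift_eq:
  fixes t :: "'h::ab_group_add \<Rightarrow> 'h"
  assumes lm: "lambda_module t" and coprime: "coprime k1 k2" and "0 < k1"
    and \<chi>1: "char_through t k1 \<chi>1" and \<chi>2: "char_through t k2 \<chi>2"
    and eq: "\<And>h. \<chi>1 ((t ^^ i) h) * \<chi>2 ((t ^^ i) h) = \<chi>1 ((t ^^ j) h) * \<chi>2 ((t ^^ j) h)"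
  shows "\<chi>1 ((t ^^ i) h) = \<chi>1 ((t ^^ j) h)"
proof -
  define \<psi> where "\<psi> x = \<chi>1 ((t ^^ j) x) / \<chi>1 ((t ^^ i) x)" for x
  have quotient1: "\<psi> x * \<chi>1 ((t ^^ i) x) = \<chi>1 ((t ^^ j) x)" for x
    unfolding \<psi>_def using char_through_nonzero[OF \<chi>1] by simp
  have quotient2: "\<psi> x * \<chi>2 ((t ^^ j) x) = \<chi>2 ((t ^^ i) x)" for x
  proof -
    have "\<psi> x * \<chi>2 ((t ^^ j) x) * \<chi>1 ((t ^^ i) x) = \<chi>2 ((t ^^ i) x) * \<chi>1 ((t ^^ i) x)"
      using quotient1[of x] eq[of x] by (simp add: algebra_simps)
    then show ?thesis
      using char_through_nonzero[OF \<chi>1] by simp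
  qed
  have invariant: "\<psi> (t y) = \<psi> y" for y
    by (rule funpow_invariant_if_coprime_periods[where f = \<psi> and t = t, OF coprime \<open>0 < k1\<close>
          char_shift_quotient_periodic[OF \<chi>1 quotient1] char_shift_quotient_periodic[OF \<chi>2 quotient2]])
  have "\<psi> h ^ k1 = 1" and "\<psi> h ^ k2 = 1"
    using char_shift_quotient_pow_eq_1[OF lm \<chi>1 quotient1 invariant]
      char_shift_quotient_pow_eq_1[OF lm \<chi>2 quotient2 invariant] by blast+
  then have "\<psi> h = 1"
    using coprime \<open>0 < k1\<close> by (rule power_eq_1_coprime)
  then show ?thesis
    using quotient1[of h] by simp
qed

lemma inj_shifts_char_product:
  fixes t :: "'h::ab_group_add \<Rightarrow> 'h"
  assumes lm: "lambda_module t" and coprime: "coprime k1 k2" and "0 < k1" and "0 < k2"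
    and \<chi>1: "char_through t k1 \<chi>1" and \<chi>2: "char_through t k2 \<chi>2"
    and inj1: "inj_on (\<lambda>i. \<chi>1 \<circ> (t ^^ i)) {..<k1}" and inj2: "inj_on (\<lambda>i. \<chi>2 \<circ> (t ^^ i)) {..<k2}"
  shows "inj_on (\<lambda>i. (\<lambda>h. \<chi>1 h * \<chi>2 h) \<circ> (t ^^ i)) {..<k1 * k2}"
proof (rule inj_onI)
  fix i j assume i: "i \<in> {..<k1 * k2}" and j: "j \<in> {..<k1 * k2}"
    and shifts_eq: "(\<lambda>h. \<chi>1 h * \<chi>2 h) \<circ> (t ^^ i) = (\<lambda>h. \<chi>1 h * \<chi>2 h) \<circ> (t ^^ j)"
  have eq1: "\<chi>1 ((t ^^ i) h) * \<chi>2 ((t ^^ i) h) = \<chi>1 ((t ^^ j) h) * \<chi>2 ((t ^^ j) h)" for h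
    using fun_cong[OF shifts_eq, of h] by simp
  then have eq2: "\<chi>2 ((t ^^ i) h) * \<chi>1 ((t ^^ i) h) = \<chi>2 ((t ^^ j) h) * \<chi>1 ((t ^^ j) h)" for h
    by (simp only: mult.commute)
  have "\<chi>1 ((t ^^ i) h) = \<chi>1 ((t ^^ j) h)" for h
    using char_product_shift_eq_imp_shift_eq[OF lm coprime \<open>0 < k1\<close> \<chi>1 \<chi>2 eq1] .
  then have "\<chi>1 \<circ> (t ^^ (i mod k1)) = \<chi>1 \<circ> (t ^^ (j mod k1))"
    by (simp add: fun_eq_iff char_through_funpow_mod[OF \<chi>1])
  then have mod1: "i mod k1 = j mod k1"
    using inj_onD[OF inj1] \<open>0 < k1\<close> by simp
  have "\<chi>2 ((t ^^ i) h) = \<chi>2 ((t ^^ j) h)" for h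
    using char_product_shift_eq_imp_shift_eq[OF lm coprime_commute[THEN iffD1, OF coprime]
        \<open>0 < k2\<close> \<chi>2 \<chi>1 eq2] .
  then have "\<chi>2 \<circ> (t ^^ (i mod k2)) = \<chi>2 \<circ> (t ^^ (j mod k2))"
    by (simp add: fun_eq_iff char_through_funpow_mod[OF \<chi>2])
  then have mod2: "i mod k2 = j mod k2"
    using inj_onD[OF inj2] \<open>0 < k2\<close> by simp
  show "i = j"
    using eq_if_mod_eq_coprime[OF coprime _ _ mod1 mod2] i j by simp
qed

section \<open>An irreducibility criterion\<close>

lemma invariant_subspace_eliminate_coordinates:
  fixes \<rho> :: "'g \<Rightarrow> complex mat"
  assumes W: "invariant_subspace n \<rho> W"
    and diagonal: "\<And>x u. u \<in> carrier_vec n \<Longrightarrow> \<rho> (D x) *\<^sub>v u = vec n (\<lambda>i. d x i * u $ i)"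
    and separating: "\<And>i j. i < n \<Longrightarrow> j < n \<Longrightarrow> i \<noteq> j \<Longrightarrow> \<exists>x. d x i \<noteq> d x j"
    and "v \<in> W" and "i < n" and "v $ i \<noteq> 0" and "m \<le> n"
  shows "\<exists>w\<in>W. w $ i \<noteq> 0 \<and> (\<forall>j<m. j \<noteq> i \<longrightarrow> w $ j = 0)"
  using \<open>m \<le> n\<close>
proof (induction m)
  case 0
  then show ?case
    using \<open>v \<in> W\<close> \<open>v $ i \<noteq> 0\<close> by auto
next
  case (Suc m)
  then obtain w where "w \<in> W" and "w $ i \<noteq> 0" and w_zeros: "\<forall>j<m. j \<noteq> i \<longrightarrow> w $ j = 0"
    by auto
  show ?case
  proof (cases "m = i")
    case True
    then show ?thesis
      using \<open>w \<in> W\<close> \<open>w $ i \<noteq> 0\<close> w_zeros less_Suc_eq by auto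
  next
    case False
    obtain x where "d x i \<noteq> d x m"
      using separating[OF \<open>i < n\<close>, of m] Suc.prems False by auto
    define w' where "w' = \<rho> (D x) *\<^sub>v w + (- d x m) \<cdot>\<^sub>v w"
    have "w' \<in> W"
      using W \<open>w \<in> W\<close> unfolding w'_def invariant_subspace_def by blast
    moreover have "w' $ l = (d x l - d x m) * w $ l" if "l < n" for l
    proof -
      have "w \<in> carrier_vec n"
        using W \<open>w \<in> W\<close> unfolding invariant_subspace_def by blast
      then show ?thesis
        unfolding w'_def diagonal[OF \<open>w \<in> carrier_vec n\<close>] using that by (simp add: algebra_simps)
    qed
    ultimately show ?thesis
      using \<open>i < n\<close> \<open>w $ i \<noteq> 0\<close> \<open>d x i \<noteq> d x m\<close> w_zeros Suc.prems
      by (intro bexI[of _ w']) (auto simp: less_Suc_eq)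
  qed
qed

lemma invariant_subspace_obtains_unit_vec:
  fixes \<rho> :: "'g \<Rightarrow> complex mat"
  assumes W: "invariant_subspace n \<rho> W"
    and diagonal: "\<And>x u. u \<in> carrier_vec n \<Longrightarrow> \<rho> (D x) *\<^sub>v u = vec n (\<lambda>i. d x i * u $ i)"
    and separating: "\<And>i j. i < n \<Longrightarrow> j < n \<Longrightarrow> i \<noteq> j \<Longrightarrow> \<exists>x. d x i \<noteq> d x j"
    and "v \<in> W" and "v \<noteq> 0\<^sub>v n"
  obtains i where "i < n" and "unit_vec n i \<in> W"
proof -
  have W_carrier: "W \<subseteq> carrier_vec n" and W_smult: "\<And>c u. u \<in> W \<Longrightarrow> c \<cdot>\<^sub>v u \<in> W"
    using W unfolding invariant_subspace_def by auto
  obtain i where "i < n" and "v $ i \<noteq> 0"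
    using \<open>v \<in> W\<close> \<open>v \<noteq> 0\<^sub>v n\<close> W_carrier by (metis carrier_vecD eq_vecI index_zero_vec subsetD)
  then obtain w where "w \<in> W" and "w $ i \<noteq> 0" and "\<forall>j<n. j \<noteq> i \<longrightarrow> w $ j = 0"
    using invariant_subspace_eliminate_coordinates[OF W diagonal separating \<open>v \<in> W\<close>] by blast
  moreover have "w \<in> carrier_vec n"
    using W_carrier \<open>w \<in> W\<close> by blast
  ultimately have "unit_vec n i = (1 / w $ i) \<cdot>\<^sub>v w"
    using \<open>i < n\<close> by (intro eq_vecI) auto
  then show ?thesis
    using that \<open>i < n\<close> W_smult \<open>w \<in> W\<close> by metis
qed

lemma invariant_subspace_eq_carrier_vec:
  assumes W: "invariant_subspace n \<rho> W" and unit_vecs: "\<And>i. i < n \<Longrightarrow> unit_vec n i \<in> W"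
  shows "W = carrier_vec n"
proof
  show "W \<subseteq> carrier_vec n"
    using W unfolding invariant_subspace_def by blast
  show "carrier_vec n \<subseteq> W"
  proof
    fix u :: "complex vec" assume "u \<in> carrier_vec n"
    have "vec n (\<lambda>j. if j < m then u $ j else 0) \<in> W" if "m \<le> n" for m
      using that
    proof (induction m)
      case 0
      have "vec n (\<lambda>j. if j < 0 then u $ j else 0) = 0\<^sub>v n"
        by (intro eq_vecI) auto
      then show ?case
        using W unfolding invariant_subspace_def by simp
    next
      case (Suc m)
      have "vec n (\<lambda>j. if j < Suc m then u $ j else 0) =
            vec n (\<lambda>j. if j < m then u $ j else 0) + (u $ m) \<cdot>\<^sub>v unit_vec n m"
        using Suc.prems by (intro eq_vecI) (auto simp: less_Suc_eq)
      then show ?case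
        using W Suc unit_vecs[of m] unfolding invariant_subspace_def by simp
    qed
    moreover have "u = vec n (\<lambda>j. if j < n then u $ j else 0)"
      using \<open>u \<in> carrier_vec n\<close> by (intro eq_vecI) auto
    ultimately show "u \<in> W"
      by (metis order_refl)
  qed
qed

lemma irreducible_repI_diagonal_monomial:
  fixes \<rho> :: "'g \<Rightarrow> complex mat"
  assumes "0 < n"
    and diagonal: "\<And>x u. u \<in> carrier_vec n \<Longrightarrow> \<rho> (D x) *\<^sub>v u = vec n (\<lambda>i. d x i * u $ i)"
    and separating: "\<And>i j. i < n \<Longrightarrow> j < n \<Longrightarrow> i \<noteq> j \<Longrightarrow> \<exists>x. d x i \<noteq> d x j"
    and transitive: "\<And>i j. i < n \<Longrightarrow> j < n \<Longrightarrow> \<exists>g c. c \<noteq> 0 \<and> \<rho> g *\<^sub>v unit_vec n i = c \<cdot>\<^sub>v unit_vec n j"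
  shows "irreducible_rep n \<rho>"
  unfolding irreducible_rep_def
proof (intro conjI allI impI \<open>0 < n\<close>)
  fix W assume W: "invariant_subspace n \<rho> W"
  show "W = {0\<^sub>v n} \<or> W = carrier_vec n"
  proof (cases "W \<subseteq> {0\<^sub>v n}")
    case True
    then show ?thesis
      using W unfolding invariant_subspace_def by blast
  next
    case False
    then obtain v where "v \<in> W" and "v \<noteq> 0\<^sub>v n"
      by blast
    then obtain i where "i < n" and "unit_vec n i \<in> W"
      using invariant_subspace_obtains_unit_vec[OF W diagonal separating] by blast
    have "unit_vec n j \<in> W" if "j < n" for j
    proof -
      obtain g c where "c \<noteq> 0" and g: "\<rho> g *\<^sub>v unit_vec n i = c \<cdot>\<^sub>v unit_vec n j"
        using transitive[OF \<open>i < n\<close> \<open>j < n\<close>] by blast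
      have "unit_vec n j = (1 / c) \<cdot>\<^sub>v (\<rho> g *\<^sub>v unit_vec n i)"
        unfolding g using \<open>c \<noteq> 0\<close> by (intro eq_vecI) auto
      then show ?thesis
        using W \<open>unit_vec n i \<in> W\<close> unfolding invariant_subspace_def by metis
    qed
    then show ?thesis
      using invariant_subspace_eq_carrier_vec[OF W] by blast
  qed
qed

section \<open>Irreducibility of \<alpha>\<close>

lemma alpha_mult_vec_index:
  assumes v: "v \<in> carrier_vec k" and l: "l < k"
  shows "(alpha t k z \<chi> (n, h) *\<^sub>v v) $ l =
    z powi n * \<chi> ((t ^^ nat ((int l - n) mod int k)) h) * v $ nat ((int l - n) mod int k)"
proof -
  define j0 where "j0 = nat ((int l - n) mod int k)"
  have "j0 < k"
    unfolding j0_def using l by (simp add: nat_less_iff)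
  have "(alpha t k z \<chi> (n, h) *\<^sub>v v) $ l = (\<Sum>j = 0..<k. alpha t k z \<chi> (n, h) $$ (l, j) * v $ j)"
    using v l by (simp add: scalar_prod_def)
  also have "\<dots> = (\<Sum>j = 0..<k. if j = j0 then z powi n * \<chi> ((t ^^ j) h) * v $ j else 0)"
  proof (intro sum.cong refl)
    fix j assume "j \<in> {0..<k}"
    moreover have "0 \<le> (int l - n) mod int k"
      using l by simp
    ultimately have "int l = (int j + n) mod int k \<longleftrightarrow> int j = (int l - n) mod int k"
      using eq_add_mod_iff_eq_diff_mod[OF l] by simp
    also have "\<dots> \<longleftrightarrow> j = j0"
      unfolding j0_def using \<open>0 \<le> (int l - n) mod int k\<close> by auto
    finally have "int l = (int j + n) mod int k \<longleftrightarrow> j = j0" .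
    then show "alpha t k z \<chi> (n, h) $$ (l, j) * v $ j = (if j = j0 then z powi n * \<chi> ((t ^^ j) h) * v $ j else 0)"
      using l \<open>j \<in> {0..<k}\<close> by (simp add: index_alpha)
  qed
  also have "\<dots> = z powi n * \<chi> ((t ^^ j0) h) * v $ j0"
    using \<open>j0 < k\<close> by simp
  finally show ?thesis
    unfolding j0_def .
qed

lemma alpha_diagonal_mult_vec:
  assumes "v \<in> carrier_vec k"
  shows "alpha t k z \<chi> (0, x) *\<^sub>v v = vec k (\<lambda>i. \<chi> ((t ^^ i) x) * v $ i)"
proof (rule eq_vecI)
  fix l assume "l < dim_vec (vec k (\<lambda>i. \<chi> ((t ^^ i) x) * v $ i))"
  then have "l < k"
    by simp
  then show "(alpha t k z \<chi> (0, x) *\<^sub>v v) $ l = vec k (\<lambda>i. \<chi> ((t ^^ i) x) * v $ i) $ l"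
    using alpha_mult_vec_index[OF assms \<open>l < k\<close>, of t z \<chi> 0 x] by (simp add: zmod_int)
qed simp

lemma alpha_mult_unit_vec:
  assumes "lambda_module t" and "char_through t k \<chi>" and "i < k" and "j < k"
  shows "alpha t k z \<chi> (int j - int i, 0) *\<^sub>v unit_vec k i = z powi (int j - int i) \<cdot>\<^sub>v unit_vec k j"
proof (rule eq_vecI)
  fix l assume "l < dim_vec (z powi (int j - int i) \<cdot>\<^sub>v unit_vec k j)"
  then have "l < k"
    by simp
  have "int l = (int i + (int j - int i)) mod int k \<longleftrightarrow> l = j"
    using \<open>j < k\<close> by auto
  then show "(alpha t k z \<chi> (int j - int i, 0) *\<^sub>v unit_vec k i) $ l =
      (z powi (int j - int i) \<cdot>\<^sub>v unit_vec k j) $ l"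
    using \<open>l < k\<close> assms(3,4)
    by (simp add: index_alpha lambda_module_funpow_zero[OF assms(1)] char_through_zero[OF assms(2)])
qed simp

definition periodic_vecs :: "nat \<Rightarrow> nat \<Rightarrow> complex vec set" where
  "periodic_vecs k a = {v \<in> carrier_vec k. \<forall>l<k. v $ ((l + a) mod k) = v $ l}"

lemma alpha_mult_vec_periodic:
  assumes \<chi>: "char_through t k \<chi>" and \<chi>_periodic: "\<And>x. \<chi> ((t ^^ a) x) = \<chi> x"
    and v: "v \<in> periodic_vecs k a" and l: "l < k"
  shows "(alpha t k z \<chi> (n, h) *\<^sub>v v) $ ((l + a) mod k) = (alpha t k z \<chi> (n, h) *\<^sub>v v) $ l"
proof -
  define j0 where "j0 = nat ((int l - n) mod int k)"
  have "j0 < k"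
    unfolding j0_def using l by (simp add: nat_less_iff)
  have "int (nat ((int ((l + a) mod k) - n) mod int k)) = (int l + int a - n) mod int k"
    using l by (simp add: of_nat_mod mod_diff_left_eq)
  also have "\<dots> = int ((j0 + a) mod k)"
    unfolding j0_def using l by (simp add: of_nat_mod mod_add_left_eq diff_add_eq)
  finally have "int (nat ((int ((l + a) mod k) - n) mod int k)) = int ((j0 + a) mod k)" .
  then have shift: "nat ((int ((l + a) mod k) - n) mod int k) = (j0 + a) mod k"
    by (rule of_nat_eq_iff[THEN iffD1])
  have "\<chi> ((t ^^ ((j0 + a) mod k)) h) = \<chi> ((t ^^ a) ((t ^^ j0) h))"
    using char_through_funpow_mod[OF \<chi>, of "a + j0" h] by (simp add: funpow_add add.commute)
  moreover have vc: "v \<in> carrier_vec k" and "v $ ((j0 + a) mod k) = v $ j0"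
    using v \<open>j0 < k\<close> by (auto simp: periodic_vecs_def)
  moreover have "(l + a) mod k < k"
    using l by simp
  ultimately have "(alpha t k z \<chi> (n, h) *\<^sub>v v) $ ((l + a) mod k) = z powi n * \<chi> ((t ^^ j0) h) * v $ j0"
    by (simp only: alpha_mult_vec_index shift \<chi>_periodic)
  also have "\<dots> = (alpha t k z \<chi> (n, h) *\<^sub>v v) $ l"
    unfolding alpha_mult_vec_index[OF vc l] j0_def ..
  finally show ?thesis .
qed

lemma invariant_subspace_periodic_vecs:
  assumes "char_through t k \<chi>" and "\<And>x. \<chi> ((t ^^ a) x) = \<chi> x"
  shows "invariant_subspace k (alpha t k z \<chi>) (periodic_vecs k a)"
  unfolding invariant_subspace_def
proof (intro conjI ballI allI)
  fix v w assume "v \<in> periodic_vecs k a" and "w \<in> periodic_vecs k a"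
  then show "v + w \<in> periodic_vecs k a"
    by (auto simp: periodic_vecs_def intro!: arg_cong2[where f = "(+)"])
next
  fix g :: "int \<times> 'a" and v assume v: "v \<in> periodic_vecs k a"
  obtain n h where g: "g = (n, h)"
    by fastforce
  have "alpha t k z \<chi> g *\<^sub>v v \<in> carrier_vec k"
    by (simp add: carrier_vecI)
  moreover have "\<forall>l<k. (alpha t k z \<chi> g *\<^sub>v v) $ ((l + a) mod k) = (alpha t k z \<chi> g *\<^sub>v v) $ l"
    unfolding g using alpha_mult_vec_periodic[OF assms v] by blast
  ultimately show "alpha t k z \<chi> g *\<^sub>v v \<in> periodic_vecs k a"
    unfolding periodic_vecs_def by blast
qed (auto simp: periodic_vecs_def)

lemma periodic_vecs_neq_zero:
  assumes "0 < k"
  shows "periodic_vecs k a \<noteq> {0\<^sub>v k}"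
proof
  assume "periodic_vecs k a = {0\<^sub>v k}"
  moreover have "vec k (\<lambda>_. 1) \<in> periodic_vecs k a"
    by (simp add: periodic_vecs_def)
  ultimately have "vec k (\<lambda>_. 1) $ 0 = (0\<^sub>v k :: complex vec) $ 0"
    by simp
  then show False
    using assms by simp
qed

lemma periodic_vecs_neq_carrier_vec:
  assumes "0 < a" and "a < k"
  shows "periodic_vecs k a \<noteq> carrier_vec k"
proof
  assume "periodic_vecs k a = carrier_vec k"
  then have "unit_vec k 0 \<in> periodic_vecs k a"
    by simp
  then have "unit_vec k 0 $ ((0 + a) mod k) = (unit_vec k 0 $ 0 :: complex)"
    using \<open>a < k\<close> unfolding periodic_vecs_def by blast
  then show False
    using assms by simp
qed

lemma inj_shifts_if_irreducible_alpha:
  fixes t :: "'h::ab_group_add \<Rightarrow> 'h"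
  assumes lm: "lambda_module t" and \<chi>: "char_through t k \<chi>"
    and irreducible: "irreducible_rep k (alpha t k z \<chi>)"
  shows "inj_on (\<lambda>i. \<chi> \<circ> (t ^^ i)) {..<k}"
proof (rule linorder_inj_onI', rule notI)
  fix i j assume "i \<in> {..<k}" "j \<in> {..<k}" "i < j" and eq: "\<chi> \<circ> (t ^^ i) = \<chi> \<circ> (t ^^ j)"
  define a where "a = j - i"
  have "0 < a" "a < k"
    using \<open>i < j\<close> \<open>j \<in> {..<k}\<close> unfolding a_def by auto
  have "\<chi> ((t ^^ a) y) = \<chi> y" for y
  proof -
    obtain x where y: "y = (t ^^ i) x"
      using lambda_module_funpow_surj[OF lm] by (metis surjD)
    have "(t ^^ a) y = (t ^^ j) x"
      unfolding y a_def using \<open>i < j\<close> funpow_add[of "j - i" i t] by simp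
    then show ?thesis
      using fun_cong[OF eq, of x] y by simp
  qed
  then have "periodic_vecs k a = {0\<^sub>v k} \<or> periodic_vecs k a = carrier_vec k"
    using irreducible invariant_subspace_periodic_vecs[OF \<chi>] unfolding irreducible_rep_def by blast
  then show False
    using periodic_vecs_neq_zero periodic_vecs_neq_carrier_vec \<open>0 < a\<close> \<open>a < k\<close> by auto
qed

lemma irreducible_alpha_if_inj_shifts:
  fixes t :: "'h::ab_group_add \<Rightarrow> 'h"
  assumes lm: "lambda_module t" and \<chi>: "char_through t k \<chi>" and "z \<noteq> 0" and "0 < k"
    and inj: "inj_on (\<lambda>i. \<chi> \<circ> (t ^^ i)) {..<k}"
  shows "irreducible_rep k (alpha t k z \<chi>)"
proof (rule irreducible_repI_diagonal_monomial[where D = "\<lambda>x. (0, x)" and d = "\<lambda>x i. \<chi> ((t ^^ i) x)"])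
  show "\<exists>x. \<chi> ((t ^^ i) x) \<noteq> \<chi> ((t ^^ j) x)" if "i < k" "j < k" "i \<noteq> j" for i j
  proof (rule ccontr)
    assume "\<not> (\<exists>x. \<chi> ((t ^^ i) x) \<noteq> \<chi> ((t ^^ j) x))"
    then have "\<chi> \<circ> (t ^^ i) = \<chi> \<circ> (t ^^ j)"
      by (simp add: fun_eq_iff)
    then show False
      using inj_onD[OF inj] that by simp
  qed
  show "\<exists>g c. c \<noteq> 0 \<and> alpha t k z \<chi> g *\<^sub>v unit_vec k i = c \<cdot>\<^sub>v unit_vec k j"
    if "i < k" "j < k" for i j
  proof (intro exI conjI)
    show "alpha t k z \<chi> (int j - int i, 0) *\<^sub>v unit_vec k i = z powi (int j - int i) \<cdot>\<^sub>v unit_vec k j"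
      using alpha_mult_unit_vec[OF lm \<chi> that] .
  qed (use \<open>z \<noteq> 0\<close> in simp)
qed (use \<open>0 < k\<close> alpha_diagonal_mult_vec in auto)

lemma irreducible_alpha_iff_inj_shifts:
  fixes t :: "'h::ab_group_add \<Rightarrow> 'h"
  assumes "lambda_module t" and "char_through t k \<chi>" and "z \<noteq> 0" and "0 < k"
  shows "irreducible_rep k (alpha t k z \<chi>) \<longleftrightarrow> inj_on (\<lambda>i. \<chi> \<circ> (t ^^ i)) {..<k}"
  using inj_shifts_if_irreducible_alpha irreducible_alpha_if_inj_shifts assms by blast

lemma irreducible_alpha_mult:
  fixes t :: "'h::ab_group_add \<Rightarrow> 'h"
  assumes lm: "lambda_module t" and coprime: "coprime k1 k2" and "0 < k1" and "0 < k2"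
    and "z1 \<noteq> 0" and "z2 \<noteq> 0" and \<chi>1: "char_through t k1 \<chi>1" and \<chi>2: "char_through t k2 \<chi>2"
    and "irreducible_rep k1 (alpha t k1 z1 \<chi>1)" and "irreducible_rep k2 (alpha t k2 z2 \<chi>2)"
  shows "irreducible_rep (k1 * k2) (alpha t (k1 * k2) (z1 * z2) (\<lambda>h. \<chi>1 h * \<chi>2 h))"
proof -
  have "char_through t (k1 * k2) (\<lambda>h. \<chi>1 h * \<chi>2 h)"
    using char_through_mult_period[OF \<chi>1, of k2] char_through_mult_period[OF \<chi>2, of k1]
    by (simp add: char_through_mult mult.commute)
  moreover have "inj_on (\<lambda>i. (\<lambda>h. \<chi>1 h * \<chi>2 h) \<circ> (t ^^ i)) {..<k1 * k2}"
    using inj_shifts_char_product[OF lm coprime \<open>0 < k1\<close> \<open>0 < k2\<close> \<chi>1 \<chi>2] assms(9,10)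
      irreducible_alpha_iff_inj_shifts[OF lm \<chi>1 \<open>z1 \<noteq> 0\<close> \<open>0 < k1\<close>]
      irreducible_alpha_iff_inj_shifts[OF lm \<chi>2 \<open>z2 \<noteq> 0\<close> \<open>0 < k2\<close>]
    by blast
  ultimately show ?thesis
    using irreducible_alpha_iff_inj_shifts[OF lm] \<open>0 < k1\<close> \<open>0 < k2\<close> \<open>z1 \<noteq> 0\<close> \<open>z2 \<noteq> 0\<close>
    by simp
qed

section \<open>Unitary equivalence\<close>

lemma unitary_mat_adjoint_mult_vec_cancel:
  assumes "unitary_mat n P" and "v \<in> carrier_vec n"
  shows "mat_adjoint P *\<^sub>v (P *\<^sub>v v) = v"
proof -
  have P_carrier: "P \<in> carrier_mat n n" and isometry: "mat_adjoint P * P = 1\<^sub>m n"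
    using assms(1) unfolding unitary_mat_def by blast+
  have "mat_adjoint P *\<^sub>v (P *\<^sub>v v) = (mat_adjoint P * P) *\<^sub>v v"
    using assoc_mult_mat_vec[OF mat_adjoint_carrier[OF P_carrier] P_carrier assms(2)] by simp
  also have "\<dots> = v"
    unfolding isometry using assms(2) by simp
  finally show ?thesis .
qed

lemma unitary_conj_mult_vec:
  assumes P: "unitary_mat n P" and A: "A \<in> carrier_mat n n" and v: "v \<in> carrier_vec n"
  shows "(P * A * mat_adjoint P) *\<^sub>v (P *\<^sub>v v) = P *\<^sub>v (A *\<^sub>v v)"
proof -
  have P_carrier: "P \<in> carrier_mat n n"
    using P unfolding unitary_mat_def by blast
  have "P * A \<in> carrier_mat n n"
    using P_carrier A by (rule mult_carrier_mat)
  then have "(P * A * mat_adjoint P) *\<^sub>v (P *\<^sub>v v) = (P * A) *\<^sub>v (mat_adjoint P *\<^sub>v (P *\<^sub>v v))"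
    using mat_adjoint_carrier[OF P_carrier] P_carrier v by (simp add: assoc_mult_mat_vec)
  also have "\<dots> = (P * A) *\<^sub>v v"
    using unitary_mat_adjoint_mult_vec_cancel[OF P v] by simp
  also have "\<dots> = P *\<^sub>v (A *\<^sub>v v)"
    using P_carrier A v by (rule assoc_mult_mat_vec)
  finally show ?thesis .
qed

lemma inj_on_unitary_mult_vec: "unitary_mat n P \<Longrightarrow> inj_on (\<lambda>v. P *\<^sub>v v) (carrier_vec n)"
  by (metis inj_onI unitary_mat_adjoint_mult_vec_cancel)

lemma invariant_subspace_unitary_image:
  fixes \<rho> \<rho>' :: "'g \<Rightarrow> complex mat"
  assumes P: "unitary_mat n P" and \<rho>'_carrier: "\<And>g. \<rho>' g \<in> carrier_mat n n"
    and conj: "\<And>g. P * \<rho>' g * mat_adjoint P = \<rho> g" and W: "invariant_subspace n \<rho>' W"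
  shows "invariant_subspace n \<rho> ((\<lambda>v. P *\<^sub>v v) ` W)"
  unfolding invariant_subspace_def
proof (intro conjI ballI allI)
  have P_carrier: "P \<in> carrier_mat n n"
    using P unfolding unitary_mat_def by blast
  have W_carrier: "W \<subseteq> carrier_vec n" and "0\<^sub>v n \<in> W"
    using W unfolding invariant_subspace_def by blast+
  show "(\<lambda>v. P *\<^sub>v v) ` W \<subseteq> carrier_vec n"
    using P_carrier W_carrier by (auto intro: mult_mat_vec_carrier)
  have "0\<^sub>v n = P *\<^sub>v 0\<^sub>v n"
    using P_carrier by auto
  then show "0\<^sub>v n \<in> (\<lambda>v. P *\<^sub>v v) ` W"
    using \<open>0\<^sub>v n \<in> W\<close> by (rule image_eqI)
  fix x y assume "x \<in> (\<lambda>v. P *\<^sub>v v) ` W" and "y \<in> (\<lambda>v. P *\<^sub>v v) ` W"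
  then obtain v w where "v \<in> W" "w \<in> W" "x = P *\<^sub>v v" "y = P *\<^sub>v w"
    by blast
  moreover have "P *\<^sub>v v + P *\<^sub>v w = P *\<^sub>v (v + w)" and "c \<cdot>\<^sub>v (P *\<^sub>v v) = P *\<^sub>v (c \<cdot>\<^sub>v v)" for c
    using \<open>v \<in> W\<close> \<open>w \<in> W\<close> W_carrier P_carrier
    by (metis mult_add_distrib_mat_vec subsetD, metis mult_mat_vec subsetD)
  moreover have "\<rho> g *\<^sub>v (P *\<^sub>v v) = P *\<^sub>v (\<rho>' g *\<^sub>v v)" for g
    unfolding conj[symmetric] using unitary_conj_mult_vec[OF P \<rho>'_carrier] \<open>v \<in> W\<close> W_carrier by blast
  ultimately show "x + y \<in> (\<lambda>v. P *\<^sub>v v) ` W" and "c \<cdot>\<^sub>v x \<in> (\<lambda>v. P *\<^sub>v v) ` W"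
    and "\<rho> g *\<^sub>v x \<in> (\<lambda>v. P *\<^sub>v v) ` W" for c g
    using W unfolding invariant_subspace_def by auto
qed

lemma irreducible_rep_unitary_conj:
  fixes \<rho> \<rho>' :: "'g \<Rightarrow> complex mat"
  assumes P: "unitary_mat n P" and \<rho>'_carrier: "\<And>g. \<rho>' g \<in> carrier_mat n n"
    and conj: "\<And>g. P * \<rho>' g * mat_adjoint P = \<rho> g" and irreducible: "irreducible_rep n \<rho>"
  shows "irreducible_rep n \<rho>'"
  unfolding irreducible_rep_def
proof (intro conjI allI impI)
  show "0 < n"
    using irreducible unfolding irreducible_rep_def by blast
  fix W assume W: "invariant_subspace n \<rho>' W"
  then have W_carrier: "W \<subseteq> carrier_vec n"
    unfolding invariant_subspace_def by blast
  have P_carrier: "P \<in> carrier_mat n n"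
    using P unfolding unitary_mat_def by blast
  have inj: "inj_on (\<lambda>v. P *\<^sub>v v) (carrier_vec n)"
    using P by (rule inj_on_unitary_mult_vec)
  have "(\<lambda>v. P *\<^sub>v v) ` W = {0\<^sub>v n} \<or> (\<lambda>v. P *\<^sub>v v) ` W = carrier_vec n"
    using irreducible invariant_subspace_unitary_image[OF P \<rho>'_carrier conj W]
    unfolding irreducible_rep_def by blast
  then show "W = {0\<^sub>v n} \<or> W = carrier_vec n"
  proof
    assume "(\<lambda>v. P *\<^sub>v v) ` W = {0\<^sub>v n}"
    also have "{0\<^sub>v n} = (\<lambda>v. P *\<^sub>v v) ` {0\<^sub>v n}"
      using P_carrier by auto
    finally show ?thesis
      using inj_on_image_eq_iff[OF inj W_carrier, of "{0\<^sub>v n}"] by simp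
  next
    assume image: "(\<lambda>v. P *\<^sub>v v) ` W = carrier_vec n"
    have "u \<in> W" if "u \<in> carrier_vec n" for u
      using inj_on_image_mem_iff[OF inj that W_carrier] mult_mat_vec_carrier[OF P_carrier that]
      unfolding image by simp
    then show ?thesis
      using W_carrier by blast
  qed
qed

definition perm_mat :: "nat \<Rightarrow> (nat \<Rightarrow> nat) \<Rightarrow> complex mat" where
  "perm_mat n \<sigma> = mat n n (\<lambda>(i, j). if j = \<sigma> i then 1 else 0)"

lemma dim_perm_mat [simp]: "dim_row (perm_mat n \<sigma>) = n" "dim_col (perm_mat n \<sigma>) = n"
  unfolding perm_mat_def by simp_all

lemma perm_mat_carrier: "perm_mat n \<sigma> \<in> carrier_mat n n"
  by (simp add: carrier_matI)

lemma index_perm_mat: "i < n \<Longrightarrow> j < n \<Longrightarrow> perm_mat n \<sigma> $$ (i, j) = (if j = \<sigma> i then 1 else 0)"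
  unfolding perm_mat_def by simp

lemma index_mat_adjoint_perm_mat:
  "i < n \<Longrightarrow> j < n \<Longrightarrow> mat_adjoint (perm_mat n \<sigma>) $$ (i, j) = (if i = \<sigma> j then 1 else 0)"
  unfolding perm_mat_def by simp

lemma index_perm_mat_mult:
  assumes "X \<in> carrier_mat n m" and "i < n" and "j < m" and "\<sigma> i < n"
  shows "(perm_mat n \<sigma> * X) $$ (i, j) = X $$ (\<sigma> i, j)"
proof -
  have "(perm_mat n \<sigma> * X) $$ (i, j) = (\<Sum>a = 0..<n. perm_mat n \<sigma> $$ (i, a) * X $$ (a, j))"
    using assms by (simp add: scalar_prod_def)
  also have "\<dots> = (\<Sum>a = 0..<n. if a = \<sigma> i then X $$ (a, j) else 0)"
    using \<open>i < n\<close> by (intro sum.cong refl) (simp add: index_perm_mat)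
  also have "\<dots> = X $$ (\<sigma> i, j)"
    using \<open>\<sigma> i < n\<close> by simp
  finally show ?thesis .
qed

lemma index_mult_adjoint_perm_mat:
  assumes "Y \<in> carrier_mat m n" and "i < m" and "j < n" and "\<sigma> j < n"
  shows "(Y * mat_adjoint (perm_mat n \<sigma>)) $$ (i, j) = Y $$ (i, \<sigma> j)"
proof -
  have "(Y * mat_adjoint (perm_mat n \<sigma>)) $$ (i, j) =
      (\<Sum>a = 0..<n. Y $$ (i, a) * mat_adjoint (perm_mat n \<sigma>) $$ (a, j))"
    using assms by (simp add: scalar_prod_def)
  also have "\<dots> = (\<Sum>a = 0..<n. if a = \<sigma> j then Y $$ (i, a) else 0)"
    using \<open>j < n\<close> by (intro sum.cong refl) (simp add: index_mat_adjoint_perm_mat del: index_mat_adjoint)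
  also have "\<dots> = Y $$ (i, \<sigma> j)"
    using \<open>\<sigma> j < n\<close> by simp
  finally show ?thesis .
qed

lemma unitary_perm_mat:
  assumes \<sigma>: "bij_betw \<sigma> {..<n} {..<n}"
  shows "unitary_mat n (perm_mat n \<sigma>)"
  unfolding unitary_mat_def
proof (intro conjI perm_mat_carrier eq_matI)
  fix a b assume "a < dim_row (1\<^sub>m n :: complex mat)" and "b < dim_col (1\<^sub>m n :: complex mat)"
  then have "a < n" and "b < n"
    by simp_all
  have "(mat_adjoint (perm_mat n \<sigma>) * perm_mat n \<sigma>) $$ (a, b) =
      (\<Sum>m = 0..<n. mat_adjoint (perm_mat n \<sigma>) $$ (a, m) * perm_mat n \<sigma> $$ (m, b))"
    using \<open>a < n\<close> \<open>b < n\<close> by (simp add: scalar_prod_def)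
  also have "\<dots> = (\<Sum>m\<in>{..<n}. (\<lambda>c. if a = c \<and> b = c then 1 else 0) (\<sigma> m))"
    using \<open>a < n\<close> \<open>b < n\<close> unfolding atLeast0LessThan
    by (intro sum.cong refl) (auto simp: index_perm_mat index_mat_adjoint_perm_mat simp del: index_mat_adjoint)
  also have "\<dots> = (\<Sum>c\<in>{..<n}. if a = c \<and> b = c then 1 else 0)"
    by (rule sum.reindex_bij_betw[OF \<sigma>])
  also have "\<dots> = (1\<^sub>m n :: complex mat) $$ (a, b)"
    using \<open>a < n\<close> \<open>b < n\<close> by (simp add: sum.delta)
  finally show "(mat_adjoint (perm_mat n \<sigma>) * perm_mat n \<sigma>) $$ (a, b) = (1\<^sub>m n :: complex mat) $$ (a, b)" .
qed simp_all

section \<open>Tensor products\<close>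

lemma index_kron_alpha_crt_index:
  fixes t :: "'h::ab_group_add \<Rightarrow> 'h"
  assumes coprime: "coprime k1 k2" and "0 < k1" and "0 < k2"
    and \<chi>1: "char_through t k1 \<chi>1" and \<chi>2: "char_through t k2 \<chi>2"
    and m: "m < k1 * k2" and m': "m' < k1 * k2"
  shows "kron (alpha t k1 z1 \<chi>1 (n, h)) (alpha t k2 z2 \<chi>2 (n, h)) $$ (crt_index k1 k2 m, crt_index k1 k2 m')
    = alpha t (k1 * k2) (z1 * z2) (\<lambda>h. \<chi>1 h * \<chi>2 h) (n, h) $$ (m, m')"
proof -
  have residue_cond: "int (m mod k) = (int (m' mod k) + n) mod int k \<longleftrightarrow> int k dvd int m - (int m' + n)"
    for k
  proof -
    have "(int (m' mod k) + n) mod int k = (int m' + n) mod int k"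
      by (simp add: of_nat_mod mod_add_left_eq)
    then show ?thesis
      by (simp add: of_nat_mod_eq_mod_iff_dvd)
  qed
  have "int m = (int m' + n) mod int (k1 * k2) \<longleftrightarrow> int (k1 * k2) dvd int m - (int m' + n)"
    using residue_cond[of "k1 * k2"] m m' by simp
  also have "\<dots> \<longleftrightarrow> int k1 dvd int m - (int m' + n) \<and> int k2 dvd int m - (int m' + n)"
    using coprime coprime_mult_dvd_iff[of "int k1" "int k2"] by simp
  finally have crt_cond: "int m = (int m' + n) mod int (k1 * k2) \<longleftrightarrow>
      int (m mod k1) = (int (m' mod k1) + n) mod int k1 \<and> int (m mod k2) = (int (m' mod k2) + n) mod int k2"
    unfolding residue_cond .
  have "crt_index k1 k2 m < k1 * k2" and "crt_index k1 k2 m' < k1 * k2"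
    using crt_index_less[OF \<open>0 < k1\<close> \<open>0 < k2\<close>] by blast+
  then have "kron (alpha t k1 z1 \<chi>1 (n, h)) (alpha t k2 z2 \<chi>2 (n, h)) $$ (crt_index k1 k2 m, crt_index k1 k2 m')
      = alpha t k1 z1 \<chi>1 (n, h) $$ (m mod k1, m' mod k1) * alpha t k2 z2 \<chi>2 (n, h) $$ (m mod k2, m' mod k2)"
    using \<open>0 < k2\<close> by (simp add: index_kron crt_index_div crt_index_mod)
  also have "\<dots> = (z1 * z2) powi n *
      (if int m = (int m' + n) mod int (k1 * k2) then \<chi>1 ((t ^^ m') h) * \<chi>2 ((t ^^ m') h) else 0)"
    unfolding crt_cond using \<open>0 < k1\<close> \<open>0 < k2\<close>
    by (simp add: index_alpha char_through_funpow_mod[OF \<chi>1] char_through_funpow_mod[OF \<chi>2]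
        power_int_mult_distrib)
  also have "\<dots> = alpha t (k1 * k2) (z1 * z2) (\<lambda>h. \<chi>1 h * \<chi>2 h) (n, h) $$ (m, m')"
    unfolding index_alpha[OF m m'] ..
  finally show ?thesis .
qed

lemma kron_alpha_unitarily_equivalent:
  fixes t :: "'h::ab_group_add \<Rightarrow> 'h"
  assumes coprime: "coprime k1 k2" and "0 < k1" and "0 < k2"
    and \<chi>1: "char_through t k1 \<chi>1" and \<chi>2: "char_through t k2 \<chi>2"
  shows "\<exists>P. unitary_mat (k1 * k2) P \<and>
    (\<forall>g. P * kron (alpha t k1 z1 \<chi>1 g) (alpha t k2 z2 \<chi>2 g) * mat_adjoint P
         = alpha t (k1 * k2) (z1 * z2) (\<lambda>h. \<chi>1 h * \<chi>2 h) g)"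
proof (intro exI conjI allI)
  let ?P = "perm_mat (k1 * k2) (crt_index k1 k2)"
  show "unitary_mat (k1 * k2) ?P"
    using unitary_perm_mat bij_betw_crt_index[OF assms(1-3)] by blast
  fix g :: "int \<times> 'h"
  obtain n h where g: "g = (n, h)"
    by fastforce
  let ?X = "kron (alpha t k1 z1 \<chi>1 (n, h)) (alpha t k2 z2 \<chi>2 (n, h))"
  have X_carrier: "?X \<in> carrier_mat (k1 * k2) (k1 * k2)"
    by (simp add: carrier_matI)
  have \<sigma>_less: "crt_index k1 k2 m < k1 * k2" for m
    using crt_index_less[OF \<open>0 < k1\<close> \<open>0 < k2\<close>] .
  show "?P * kron (alpha t k1 z1 \<chi>1 g) (alpha t k2 z2 \<chi>2 g) * mat_adjoint ?P
      = alpha t (k1 * k2) (z1 * z2) (\<lambda>h. \<chi>1 h * \<chi>2 h) g"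
    unfolding g
  proof (rule eq_matI)
    fix m m' assume "m < dim_row (alpha t (k1 * k2) (z1 * z2) (\<lambda>h. \<chi>1 h * \<chi>2 h) (n, h))"
      and "m' < dim_col (alpha t (k1 * k2) (z1 * z2) (\<lambda>h. \<chi>1 h * \<chi>2 h) (n, h))"
    then have m: "m < k1 * k2" and m': "m' < k1 * k2"
      by simp_all
    have "?P * ?X \<in> carrier_mat (k1 * k2) (k1 * k2)"
      using perm_mat_carrier X_carrier by (rule mult_carrier_mat)
    then have "(?P * ?X * mat_adjoint ?P) $$ (m, m') = (?P * ?X) $$ (m, crt_index k1 k2 m')"
      using m m' \<sigma>_less by (rule index_mult_adjoint_perm_mat)
    also have "\<dots> = ?X $$ (crt_index k1 k2 m, crt_index k1 k2 m')"
      using index_perm_mat_mult[OF X_carrier m \<sigma>_less \<sigma>_less] .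
    also have "\<dots> = alpha t (k1 * k2) (z1 * z2) (\<lambda>h. \<chi>1 h * \<chi>2 h) (n, h) $$ (m, m')"
      using index_kron_alpha_crt_index[OF assms m m'] .
    finally show "(?P * ?X * mat_adjoint ?P) $$ (m, m') = alpha t (k1 * k2) (z1 * z2) (\<lambda>h. \<chi>1 h * \<chi>2 h) (n, h) $$ (m, m')" .
  qed (simp_all add: perm_mat_def)
qed

theorem proposition4p7:
  fixes t :: "'h::ab_group_add \<Rightarrow> 'h" and k1 k2 :: nat and z1 z2 :: complex
    and \<chi>1 \<chi>2 :: "'h \<Rightarrow> complex"
  assumes "lambda_module t" and "k1 \<ge> 1" and "k2 \<ge> 1" and "coprime k1 k2"
    and "cmod z1 = 1" and "cmod z2 = 1"
    and "char_through t k1 \<chi>1" and "char_through t k2 \<chi>2"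
  shows "(\<exists>P. unitary_mat (k1 * k2) P \<and>
            (\<forall>g. P * kron (alpha t k1 z1 \<chi>1 g) (alpha t k2 z2 \<chi>2 g) * mat_adjoint P
                 = alpha t (k1 * k2) (z1 * z2) (\<lambda>h. \<chi>1 h * \<chi>2 h) g))
       \<and> (irreducible_rep k1 (alpha t k1 z1 \<chi>1) \<and> irreducible_rep k2 (alpha t k2 z2 \<chi>2)
          \<longrightarrow> irreducible_rep (k1 * k2) (\<lambda>g. kron (alpha t k1 z1 \<chi>1 g) (alpha t k2 z2 \<chi>2 g)))"
proof -
  have "0 < k1" and "0 < k2" and "z1 \<noteq> 0" and "z2 \<noteq> 0"
    using assms(2,3,5,6) by auto
  obtain P where P: "unitary_mat (k1 * k2) P"
    and conj: "\<And>g. P * kron (alpha t k1 z1 \<chi>1 g) (alpha t k2 z2 \<chi>2 g) * mat_adjoint P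
                 = alpha t (k1 * k2) (z1 * z2) (\<lambda>h. \<chi>1 h * \<chi>2 h) g"
    using kron_alpha_unitarily_equivalent[OF assms(4) \<open>0 < k1\<close> \<open>0 < k2\<close> assms(7,8)] by blast
  have "irreducible_rep (k1 * k2) (\<lambda>g. kron (alpha t k1 z1 \<chi>1 g) (alpha t k2 z2 \<chi>2 g))"
    if "irreducible_rep k1 (alpha t k1 z1 \<chi>1)" and "irreducible_rep k2 (alpha t k2 z2 \<chi>2)"
    using irreducible_rep_unitary_conj[OF P _ conj] irreducible_alpha_mult[OF assms(1,4)
        \<open>0 < k1\<close> \<open>0 < k2\<close> \<open>z1 \<noteq> 0\<close> \<open>z2 \<noteq> 0\<close> assms(7,8) that]
    by (simp add: carrier_matI)
  with P conj show ?thesis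
    by blast
qed

end
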